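(* Let $q\ge 7$ be an odd integer. Then the achromatic number of $K_6\square K_q$ is at least $2q+3$.
   Context: For a finite simple graph $G$ and a finite colour set $C$, a vertex colouring $f:V(G)\to C$ is complete if for any two distinct colours $c_1,c_2\in C$ there is an edge $v_1v_2\in E(G)$ with $f(v_i)=c_i$, $i=1,2$. The achromatic number of $G$ is the maximum number of colours in a proper complete vertex colouring of $G$. The Cartesian product $G_1\square G_2$ has vertex set $V(G_1)\times V(G_2)$, with $(u_1,u_2)$ adjacent to $(w_1,w_2)$ iff either $u_1w_1\in E(G_1)$ and $u_2=w_2$, or $u_2w_2\in E(G_2)$ and $u_1=w_1$. *)

theory Defs
  imports Main
begin

text \<open>Finite simple graphs are given by a vertex set V and an edge relation E
  (intended symmetric and irreflexive, restricted to V).\<close>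

definition proper_colouring :: "'a set \<Rightarrow> ('a \<Rightarrow> 'a \<Rightarrow> bool) \<Rightarrow> ('a \<Rightarrow> 'c) \<Rightarrow> bool" where
  "proper_colouring V E f \<longleftrightarrow> (\<forall>u\<in>V. \<forall>w\<in>V. E u w \<longrightarrow> f u \<noteq> f w)"

definition complete_colouring :: "'a set \<Rightarrow> ('a \<Rightarrow> 'a \<Rightarrow> bool) \<Rightarrow> 'c set \<Rightarrow> ('a \<Rightarrow> 'c) \<Rightarrow> bool" where
  "complete_colouring V E C f \<longleftrightarrow>
     (\<forall>c1\<in>C. \<forall>c2\<in>C. c1 \<noteq> c2 \<longrightarrow>
        (\<exists>v1\<in>V. \<exists>v2\<in>V. E v1 v2 \<and> f v1 = c1 \<and> f v2 = c2))"

definition achromatic_number :: "'a set \<Rightarrow> ('a \<Rightarrow> 'a \<Rightarrow> bool) \<Rightarrow> nat" where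
  "achromatic_number V E = Max {k. \<exists>f :: 'a \<Rightarrow> nat. f ` V \<subseteq> {0..<k} \<and>
        proper_colouring V E f \<and> complete_colouring V E {0..<k} f}"

definition complete_graph_edge :: "nat \<Rightarrow> nat \<Rightarrow> bool" where
  "complete_graph_edge u w \<longleftrightarrow> u \<noteq> w"

definition cart_prod_edge ::
  "('a \<Rightarrow> 'a \<Rightarrow> bool) \<Rightarrow> ('b \<Rightarrow> 'b \<Rightarrow> bool) \<Rightarrow> 'a \<times> 'b \<Rightarrow> 'a \<times> 'b \<Rightarrow> bool" where
  "cart_prod_edge E1 E2 x y \<longleftrightarrow>
     (E1 (fst x) (fst y) \<and> snd x = snd y) \<or> (E2 (snd x) (snd y) \<and> fst x = fst y)"

end

theory Submission
  imports Defs
begin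

(* Write q = 2m + 3 and use 9 + 4m = 2q + 3 colours. The rows of K_6 are grouped into the pairs
   {p, 5 - p}; the nine small colours 3p + x fill the first three columns, rows p and 5 - p of
   column j showing the two colours 3p + x with x \<noteq> j, so any two small colours meet in a
   column. The other 2m columns carry four blocks of m large colours, block t spread over a
   triple of rows. Identifying the rows with the edges of K_4, the triples with its vertex stars
   and the row pairs with its perfect matchings, any two triples share a row and every triple
   meets every row pair; as each colour occurs in all rows of its pair or triple, two colours
   that are not both small meet in a row. *)

lemma cart_prod_complete_graph_edge_iff:
  "cart_prod_edge complete_graph_edge complete_graph_edge u w \<longleftrightarrow>
     u \<noteq> w \<and> (fst u = fst w \<or> snd u = snd w)"
  unfolding cart_prod_edge_def complete_graph_edge_def by (auto simp: prod_eq_iff)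

lemma proper_colouring_cart_prod_completeI:
  assumes "\<And>r j j'. (r, j) \<in> V \<Longrightarrow> (r, j') \<in> V \<Longrightarrow> j \<noteq> j' \<Longrightarrow> f (r, j) \<noteq> f (r, j')"
    and "\<And>r r' j. (r, j) \<in> V \<Longrightarrow> (r', j) \<in> V \<Longrightarrow> r \<noteq> r' \<Longrightarrow> f (r, j) \<noteq> f (r', j)"
  shows "proper_colouring V (cart_prod_edge complete_graph_edge complete_graph_edge) f"
  unfolding proper_colouring_def cart_prod_complete_graph_edge_iff
  using assms by (metis prod.collapse)

lemma complete_colouring_cart_prod_completeI:
  assumes "\<And>c c'. c \<in> C \<Longrightarrow> c' \<in> C \<Longrightarrow> c \<noteq> c' \<Longrightarrow>
      \<exists>u\<in>V. \<exists>w\<in>V. (fst u = fst w \<or> snd u = snd w) \<and> f u = c \<and> f w = c'"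
  shows "complete_colouring V (cart_prod_edge complete_graph_edge complete_graph_edge) C f"
  unfolding complete_colouring_def cart_prod_complete_graph_edge_iff
  using assms by metis

lemma complete_colouring_colour_used:
  assumes "complete_colouring V E C f" "c \<in> C" "c' \<in> C" "c \<noteq> c'"
  shows "c \<in> f ` V"
  using assms unfolding complete_colouring_def by blast

lemma complete_colouring_card_le:
  assumes "finite V" "complete_colouring V E {0..<k} (f :: 'a \<Rightarrow> nat)" "2 \<le> k"
  shows "k \<le> card V"
proof -
  have "{0..<k} \<subseteq> f ` V"
  proof
    fix c assume "c \<in> {0..<k}"
    then show "c \<in> f ` V"
      using complete_colouring_colour_used[OF assms(2), of c "if c = 0 then 1 else 0"] assms(3)
      by (auto split: if_splits)
  qed
  then have "card {0..<k} \<le> card (f ` V)"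
    using assms(1) by (intro card_mono) auto
  also have "\<dots> \<le> card V"
    using assms(1) by (rule card_image_le)
  finally show ?thesis by simp
qed

lemma achromatic_number_ge:
  assumes "finite V" "(f :: 'a \<Rightarrow> nat) ` V \<subseteq> {0..<k}"
    and "proper_colouring V E f" "complete_colouring V E {0..<k} f"
  shows "k \<le> achromatic_number V E"
proof -
  let ?K = "{k. \<exists>f :: 'a \<Rightarrow> nat. f ` V \<subseteq> {0..<k} \<and>
        proper_colouring V E f \<and> complete_colouring V E {0..<k} f}"
  have "?K \<subseteq> {..card V + 1}"
    using complete_colouring_card_le[OF assms(1)] by (force simp: not_le)
  then have "finite ?K"
    by (rule finite_subset) simp
  moreover have "k \<in> ?K"
    using assms(2-4) by blast
  ultimately show ?thesis
    unfolding achromatic_number_def by (rule Max_ge)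
qed

definition cyc_pred :: "nat \<Rightarrow> nat \<Rightarrow> nat" where
  "cyc_pred m i = (if i = 0 then m - 1 else i - 1)"

lemma cyc_pred_less: "i < m \<Longrightarrow> cyc_pred m i < m"
  unfolding cyc_pred_def by auto

lemma cyc_pred_neq: "2 \<le> m \<Longrightarrow> i < m \<Longrightarrow> cyc_pred m i \<noteq> i"
  unfolding cyc_pred_def by auto

lemma cyc_pred_inj: "i < m \<Longrightarrow> k < m \<Longrightarrow> cyc_pred m i = cyc_pred m k \<Longrightarrow> i = k"
  unfolding cyc_pred_def by (auto split: if_splits)

lemma cyc_pred_surj:
  assumes "i < m"
  shows "\<exists>k<m. cyc_pred m k = i"
proof (cases "i + 1 < m")
  case True
  then show ?thesis
    by (intro exI[of _ "i + 1"]) (simp add: cyc_pred_def)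
next
  case False
  then show ?thesis
    using assms by (intro exI[of _ 0]) (auto simp: cyc_pred_def)
qed

definition small_colour :: "nat \<Rightarrow> nat \<Rightarrow> nat" where
  "small_colour p x = 3 * p + x"

definition large_colour :: "nat \<Rightarrow> nat \<Rightarrow> nat \<Rightarrow> nat" where
  "large_colour m t i = 9 + m * t + i"

lemma small_colour_eq_iff:
  "x < 3 \<Longrightarrow> x' < 3 \<Longrightarrow> small_colour p x = small_colour p' x' \<longleftrightarrow> p = p' \<and> x = x'"
  unfolding small_colour_def by presburger

lemma large_colour_eq_iff:
  assumes "i < m" "i' < m"
  shows "large_colour m t i = large_colour m t' i' \<longleftrightarrow> t = t' \<and> i = i'"
proof
  assume "large_colour m t i = large_colour m t' i'"
  then have "m * t + i = m * t' + i'"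
    by (simp add: large_colour_def)
  then have "(m * t + i) div m = (m * t' + i') div m" "(m * t + i) mod m = (m * t' + i') mod m"
    by simp_all
  then show "t = t' \<and> i = i'"
    using assms by simp
qed simp

lemma small_colour_less_large_colour:
  "p < 3 \<Longrightarrow> x < 3 \<Longrightarrow> small_colour p x < large_colour m t i"
  unfolding small_colour_def large_colour_def by simp

lemma small_colour_less: "p < 3 \<Longrightarrow> x < 3 \<Longrightarrow> small_colour p x < 9"
  by (simp add: small_colour_def)

lemma large_colour_less:
  assumes "t < 4" "i < m"
  shows "large_colour m t i < 9 + 4 * m"
proof -
  have "m * t + i < m * (t + 1)"
    using assms(2) by simp
  also have "\<dots> \<le> m * 4"
    using assms(1) by (intro mult_le_mono2) simp
  finally show ?thesis
    by (simp add: large_colour_def)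
qed

lemma colour_cases:
  assumes "c < 9 + 4 * m"
  obtains p x where "p < 3" "x < 3" "c = small_colour p x"
    | t i where "t < 4" "i < m" "c = large_colour m t i"
proof (cases "c < 9")
  case True
  then show ?thesis
    using that(1)[of "c div 3" "c mod 3"] by (simp add: small_colour_def)
next
  case False
  then have "(c - 9) div m < 4" "(c - 9) mod m < m"
    using assms by (auto simp: div_less_iff_less_mult)
  then show ?thesis
    using that(2)[of "(c - 9) div m" "(c - 9) mod m"] False by (simp add: large_colour_def)
qed

(* Row r \<in> {0, ..., 5} is the edge 01, 02, 03, 12, 13, 23 of K_4, and the two halves h of the
   large columns give row r colours from the blocks at the two ends of that edge. A block placed on two rows of the
   same half uses index i in one of them and the cyclic predecessor of i in the other. *)
definition large_block :: "bool \<Rightarrow> nat \<Rightarrow> nat" where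
  "large_block h r = (if h then [1, 0, 3, 2, 3, 2] else [0, 2, 0, 1, 1, 3]) ! r"

definition large_shifted :: "bool \<Rightarrow> nat \<Rightarrow> bool" where
  "large_shifted h r \<longleftrightarrow> r = 4 \<or> r = (if h then 5 else 2)"

lemma less_6_cases: "(r :: nat) < 6 \<Longrightarrow> r \<in> {0, 1, 2, 3, 4, 5}"
  by auto

lemma large_block_less: "r < 6 \<Longrightarrow> large_block h r < 4"
  by (drule less_6_cases) (cases h; auto simp: large_block_def nth_Cons_numeral)

lemma large_block_shifted_inj:
  "r < 6 \<Longrightarrow> r' < 6 \<Longrightarrow> large_block h r = large_block h r' \<Longrightarrow>
    large_shifted h r = large_shifted h r' \<Longrightarrow> r = r'"
  by (drule less_6_cases)+ (cases h; auto simp: large_block_def nth_Cons_numeral large_shifted_def)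

lemma large_block_halves_differ: "r < 6 \<Longrightarrow> large_block True r \<noteq> large_block False r"
  by (drule less_6_cases) (auto simp: large_block_def nth_Cons_numeral)

lemma ex_less_6_iff: "(\<exists>r<6. P r) \<longleftrightarrow> P 0 \<or> P 1 \<or> P 2 \<or> P 3 \<or> P 4 \<or> P (5 :: nat)"
  by (auto simp: numeral_eq_Suc less_Suc_eq)

lemma large_blocks_meet:
  assumes "t < 4" "t' < 4"
  shows "\<exists>r<6. (\<exists>h. large_block h r = t) \<and> (\<exists>h. large_block h r = t')"
proof -
  have "t \<in> {0, 1, 2, 3}" "t' \<in> {0, 1, 2, 3}"
    using assms by auto
  then show ?thesis
    unfolding ex_less_6_iff ex_bool_eq large_block_def by (auto simp: nth_Cons_numeral)
qed

lemma row_pair_meets_large_block: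
  assumes "p < 3" "t < 4"
  shows "\<exists>r\<in>{p, 5 - p}. \<exists>h. large_block h r = t"
proof -
  have "p \<in> {0, 1, 2}" "t \<in> {0, 1, 2, 3}"
    using assms by auto
  then show ?thesis
    unfolding ex_bool_eq large_block_def by (auto simp: nth_Cons_numeral)
qed

definition large_column :: "nat \<Rightarrow> bool \<Rightarrow> nat \<Rightarrow> nat" where
  "large_column m h i = 3 + (if h then m else 0) + i"

definition k6_colouring :: "nat \<Rightarrow> nat \<times> nat \<Rightarrow> nat" where
  "k6_colouring m = (\<lambda>(r, j).
     if j < 3 then small_colour (min r (5 - r)) ((j + 1 + r div 3) mod 3)
     else let h = (3 + m \<le> j); i = (j - 3) mod m in
       large_colour m (large_block h r) (if large_shifted h r then cyc_pred m i else i))"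

lemma k6_colouring_small:
  "j < 3 \<Longrightarrow> k6_colouring m (r, j) = small_colour (min r (5 - r)) ((j + 1 + r div 3) mod 3)"
  by (simp add: k6_colouring_def)

lemma k6_colouring_large:
  "i < m \<Longrightarrow> k6_colouring m (r, large_column m h i) =
     large_colour m (large_block h r) (if large_shifted h r then cyc_pred m i else i)"
  by (cases h) (simp_all add: k6_colouring_def large_column_def)

lemma large_column_less: "i < m \<Longrightarrow> large_column m h i < 2 * m + 3"
  by (simp add: large_column_def)

lemma column_cases:
  assumes "j < 2 * m + 3"
  obtains "j < 3" | h i where "i < m" "j = large_column m h i"
proof (cases "j < 3")
  case False
  then have "j = large_column m (3 + m \<le> j) ((j - 3) mod m)" "(j - 3) mod m < m"
    using assms by (auto simp: large_column_def le_mod_geq)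
  then show ?thesis
    using that(2) by blast
qed (rule that(1))

lemma k6_colouring_less:
  assumes "r < 6" "j < 2 * m + 3"
  shows "k6_colouring m (r, j) < 9 + 4 * m"
  using assms(2)
proof (cases rule: column_cases)
  case 1
  have "small_colour (min r (5 - r)) ((j + 1 + r div 3) mod 3) < 9"
    by (intro small_colour_less) simp_all
  then show ?thesis
    using 1 by (simp add: k6_colouring_small)
next
  case (2 h i)
  then show ?thesis
    using assms(1) by (simp add: k6_colouring_large large_colour_less large_block_less cyc_pred_less)
qed

lemma k6_colouring_column_inj:
  assumes "2 \<le> m" "r < 6" "r' < 6" "r \<noteq> r'" "j < 2 * m + 3"
  shows "k6_colouring m (r, j) \<noteq> k6_colouring m (r', j)"
  using assms(5)
proof (cases rule: column_cases)
  case 1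
  then have "j \<in> {0, 1, 2}" "r \<in> {0, 1, 2, 3, 4, 5}" "r' \<in> {0, 1, 2, 3, 4, 5}"
    using assms(2,3) by auto
  then show ?thesis
    using assms(4) 1 by (auto simp: k6_colouring_small small_colour_eq_iff)
next
  case (2 h i)
  then have "cyc_pred m i \<noteq> i"
    using assms(1) by (simp add: cyc_pred_neq)
  then show ?thesis
    using 2 assms(2-4) large_block_shifted_inj[of r r' h]
    by (auto simp: k6_colouring_large large_colour_eq_iff cyc_pred_less)
qed

lemma k6_colouring_row_inj:
  assumes "r < 6" "j < 2 * m + 3" "j' < 2 * m + 3" "j \<noteq> j'"
  shows "k6_colouring m (r, j) \<noteq> k6_colouring m (r, j')"
proof -
  have pair: "min r (5 - r) < 3"
    by simp
  have small_below_large: "k6_colouring m (r, j1) < k6_colouring m (r, large_column m h i)"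
    if "j1 < 3" "i < m" for j1 h i
    using that pair by (simp add: k6_colouring_small k6_colouring_large small_colour_less_large_colour)
  from assms(2) show ?thesis
  proof (cases rule: column_cases)
    case 1
    from assms(3) show ?thesis
    proof (cases rule: column_cases)
      case 1
      then have "(j + 1 + r div 3) mod 3 \<noteq> (j' + 1 + r div 3) mod 3"
        using \<open>j < 3\<close> assms(4) by presburger
      then show ?thesis
        using 1 \<open>j < 3\<close> by (simp add: k6_colouring_small small_colour_eq_iff)
    next
      case (2 h i)
      then show ?thesis
        using small_below_large[OF \<open>j < 3\<close>] by (metis less_irrefl)
    qed
  next
    case (2 h i)
    from assms(3) show ?thesis
    proof (cases rule: column_cases)
      case 1
      then show ?thesis
        using small_below_large[OF 1 \<open>i < m\<close>] 2 by (metis less_irrefl)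
    next
      case (2 h' i')
      then show ?thesis
        using \<open>j = large_column m h i\<close> \<open>i < m\<close> assms(1,4)
          large_block_halves_differ[OF assms(1)] cyc_pred_inj[of i m i']
        by (cases h; cases h') (auto simp: k6_colouring_large large_colour_eq_iff cyc_pred_less)
    qed
  qed
qed

definition occurs_in_row :: "nat \<Rightarrow> nat \<Rightarrow> nat \<Rightarrow> bool" where
  "occurs_in_row m c r \<longleftrightarrow> (\<exists>j<2 * m + 3. k6_colouring m (r, j) = c)"

lemma small_colour_occurs_in_row:
  assumes "p < 3" "x < 3" "r \<in> {p, 5 - p}"
  shows "occurs_in_row m (small_colour p x) r"
proof -
  have "\<exists>j<3. (j + 1 + r div 3) mod 3 = x"
    using assms(2) by presburger
  then obtain j where "j < 3" "(j + 1 + r div 3) mod 3 = x"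
    by blast
  moreover have "min r (5 - r) = p"
    using assms(1,3) by auto
  ultimately show ?thesis
    unfolding occurs_in_row_def by (intro exI[of _ j]) (simp add: k6_colouring_small)
qed

lemma large_colour_occurs_in_row:
  assumes "r < 6" "i < m"
  shows "occurs_in_row m (large_colour m (large_block h r) i) r"
proof (cases "large_shifted h r")
  case True
  obtain k where "k < m" "cyc_pred m k = i"
    using cyc_pred_surj[OF assms(2)] by blast
  then show ?thesis
    unfolding occurs_in_row_def using True
    by (intro exI[of _ "large_column m h k"]) (simp add: k6_colouring_large large_column_less)
next
  case False
  then show ?thesis
    unfolding occurs_in_row_def using assms(2)
    by (intro exI[of _ "large_column m h i"]) (simp add: k6_colouring_large large_column_less)
qed

lemma colours_share_row:
  assumes "c < 9 + 4 * m" "c' < 9 + 4 * m" "\<not> (c < 9 \<and> c' < 9)"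
  shows "\<exists>r<6. occurs_in_row m c r \<and> occurs_in_row m c' r"
proof -
  have small_large: "\<exists>r<6. occurs_in_row m (small_colour p x) r \<and> occurs_in_row m (large_colour m t i) r"
    if small: "p < 3" "x < 3" and large: "t < 4" "i < m" for p x t i
  proof -
    obtain r h where r: "r \<in> {p, 5 - p}" and t: "large_block h r = t"
      using row_pair_meets_large_block[OF small(1) large(1)] by blast
    have "r < 6"
      using r small(1) by auto
    moreover have "occurs_in_row m (small_colour p x) r"
      using small_colour_occurs_in_row[OF small r] .
    moreover have "occurs_in_row m (large_colour m t i) r"
      using large_colour_occurs_in_row[OF \<open>r < 6\<close> large(2)] t by blast
    ultimately show ?thesis
      by blast
  qed
  have large_large: "\<exists>r<6. occurs_in_row m (large_colour m t i) r \<and> occurs_in_row m (large_colour m t' i') r"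
    if t: "t < 4" "t' < 4" and i: "i < m" "i' < m" for t i t' i'
  proof -
    obtain r h h' where "r < 6" "large_block h r = t" "large_block h' r = t'"
      using large_blocks_meet[OF t] by blast
    then show ?thesis
      using i large_colour_occurs_in_row by blast
  qed
  from assms(1) show ?thesis
  proof (cases rule: colour_cases)
    case c: (1 p x)
    from assms(2) show ?thesis
    proof (cases rule: colour_cases)
      case 1
      then show ?thesis
        using c assms(3) small_colour_less by blast
    next
      case (2 t i)
      then show ?thesis
        using c small_large by blast
    qed
  next
    case c: (2 t i)
    from assms(2) show ?thesis
    proof (cases rule: colour_cases)
      case (1 p x)
      then show ?thesis
        using c small_large by blast
    next
      case (2 t' i')
      then show ?thesis
        using c large_large by blast
    qed
  qed
qed

lemma small_colour_occurs_in_column: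
  assumes "p < 3" "x < 3" "j < 3" "x \<noteq> j"
  shows "\<exists>r<6. k6_colouring m (r, j) = small_colour p x"
proof (cases "x = (j + 1) mod 3")
  case True
  then show ?thesis
    using assms by (intro exI[of _ p]) (simp add: k6_colouring_small)
next
  case False
  then have "x = (j + 2) mod 3"
    using assms(2-4) by presburger
  moreover have "(5 - p) div 3 = 1"
    using assms(1) by auto
  ultimately show ?thesis
    using assms by (intro exI[of _ "5 - p"]) (auto simp: k6_colouring_small)
qed

lemma small_colours_share_column:
  assumes "c < 9" "c' < 9"
  shows "\<exists>j<3. \<exists>r<6. \<exists>r'<6. k6_colouring m (r, j) = c \<and> k6_colouring m (r', j) = c'"
proof -
  have "\<exists>j<3. j \<noteq> c mod 3 \<and> j \<noteq> c' mod 3"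
    by presburger
  then obtain j where j: "j < 3" "j \<noteq> c mod 3" "j \<noteq> c' mod 3"
    by blast
  have "c div 3 < 3" "c' div 3 < 3"
    using assms by simp_all
  then obtain r r' where "r < 6" "k6_colouring m (r, j) = small_colour (c div 3) (c mod 3)"
    and "r' < 6" "k6_colouring m (r', j) = small_colour (c' div 3) (c' mod 3)"
    using j small_colour_occurs_in_column by (metis mod_less_divisor zero_less_numeral)
  moreover have "c = small_colour (c div 3) (c mod 3)" "c' = small_colour (c' div 3) (c' mod 3)"
    by (simp_all add: small_colour_def)
  ultimately show ?thesis
    using j(1) by metis
qed

lemma k6_colouring_proper:
  assumes "2 \<le> m"
  shows "proper_colouring ({0..<6} \<times> {0..<2 * m + 3})
           (cart_prod_edge complete_graph_edge complete_graph_edge) (k6_colouring m)"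
  using k6_colouring_row_inj k6_colouring_column_inj[OF assms]
  by (intro proper_colouring_cart_prod_completeI) auto

lemma k6_colouring_complete:
  "complete_colouring ({0..<6} \<times> {0..<2 * m + 3})
     (cart_prod_edge complete_graph_edge complete_graph_edge) {0..<9 + 4 * m} (k6_colouring m)"
proof (rule complete_colouring_cart_prod_completeI)
  fix c c' assume "c \<in> {0..<9 + 4 * m}" "c' \<in> {0..<9 + 4 * m}"
  then have c: "c < 9 + 4 * m" "c' < 9 + 4 * m"
    by simp_all
  show "\<exists>u\<in>{0..<6} \<times> {0..<2 * m + 3}. \<exists>w\<in>{0..<6} \<times> {0..<2 * m + 3}.
          (fst u = fst w \<or> snd u = snd w) \<and> k6_colouring m u = c \<and> k6_colouring m w = c'"
  proof (cases "c < 9 \<and> c' < 9")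
    case True
    then obtain j r r' where "j < 3" "r < 6" "r' < 6"
      "k6_colouring m (r, j) = c" "k6_colouring m (r', j) = c'"
      using small_colours_share_column by blast
    then show ?thesis
      by (intro bexI[of _ "(r, j)"] bexI[of _ "(r', j)"]) auto
  next
    case False
    then obtain r j j' where "r < 6" "j < 2 * m + 3" "j' < 2 * m + 3"
      "k6_colouring m (r, j) = c" "k6_colouring m (r, j') = c'"
      using colours_share_row[OF c] unfolding occurs_in_row_def by blast
    then show ?thesis
      by (intro bexI[of _ "(r, j)"] bexI[of _ "(r, j')"]) auto
  qed
qed

theorem proposition3:
  fixes q :: nat
  assumes "q \<ge> 7" and "odd q"
  shows "achromatic_number ({0..<6} \<times> {0..<q})
           (cart_prod_edge complete_graph_edge complete_graph_edge) \<ge> 2 * q + 3"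
proof -
  obtain k where k: "q = 2 * k + 1"
    using \<open>odd q\<close> by (rule oddE)
  define m where "m = k - 1"
  have q: "q = 2 * m + 3" and m: "2 \<le> m"
    using k \<open>q \<ge> 7\<close> unfolding m_def by auto
  have "k6_colouring m ` ({0..<6} \<times> {0..<2 * m + 3}) \<subseteq> {0..<9 + 4 * m}"
    using k6_colouring_less by auto
  then have "9 + 4 * m \<le> achromatic_number ({0..<6} \<times> {0..<2 * m + 3})
               (cart_prod_edge complete_graph_edge complete_graph_edge)"
    using k6_colouring_proper[OF m] k6_colouring_complete by (intro achromatic_number_ge) auto
  then show ?thesis
    unfolding q by simp
qed

end
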